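(* Let $G$ be a connected graph with no true twins and with $\mathrm{diam}(G)=2$. Then $\mathrm{gp}(G)=\omega(G_{\rm SR})$ if and only if $\mathrm{gp}(G)=\alpha(G)$.
   Context: All graphs are finite and simple. For a connected graph $G$, $d_G(u,v)$ is the distance between $u$ and $v$, and a geodesic is a shortest path. A set $S\subseteq V(G)$ is a general position set if no three pairwise distinct vertices of $S$ lie on a common geodesic of $G$; $\mathrm{gp}(G)$ is the maximum cardinality of a general position set. A vertex $u$ is maximally distant from a vertex $v$ if every neighbor $w$ of $u$ satisfies $d_G(v,w)\le d_G(u,v)$; $u$ and $v$ are mutually maximally distant (MMD) if $u$ is maximally distant from $v$ and $v$ is maximally distant from $u$. The strong resolving graph $G_{\rm SR}$ has vertex set $V(G)$, two distinct vertices being adjacent in $G_{\rm SR}$ iff they are MMD in $G$. $\omega$ denotes the clique number and $\alpha$ the independence number. Vertices $u,v$ are true twins if $N[u]=N[v]$ (closed neighborhoods). *)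

theory Defs
  imports Main
begin

definition simple_graph :: "'a set \<Rightarrow> ('a \<Rightarrow> 'a \<Rightarrow> bool) \<Rightarrow> bool" where
  "simple_graph V E \<longleftrightarrow> finite V \<and> (\<forall>u v. E u v \<longrightarrow> u \<in> V \<and> v \<in> V)
     \<and> (\<forall>u v. E u v \<longrightarrow> E v u) \<and> (\<forall>u. \<not> E u u)"

definition is_walk :: "'a set \<Rightarrow> ('a \<Rightarrow> 'a \<Rightarrow> bool) \<Rightarrow> 'a list \<Rightarrow> bool" where
  "is_walk V E xs \<longleftrightarrow> xs \<noteq> [] \<and> set xs \<subseteq> V \<and>
     (\<forall>i. Suc i < length xs \<longrightarrow> E (xs ! i) (xs ! Suc i))"

definition walk_between :: "'a set \<Rightarrow> ('a \<Rightarrow> 'a \<Rightarrow> bool) \<Rightarrow> 'a \<Rightarrow> 'a \<Rightarrow> 'a list \<Rightarrow> bool" where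
  "walk_between V E u v xs \<longleftrightarrow> is_walk V E xs \<and> hd xs = u \<and> last xs = v"

definition connected_graph :: "'a set \<Rightarrow> ('a \<Rightarrow> 'a \<Rightarrow> bool) \<Rightarrow> bool" where
  "connected_graph V E \<longleftrightarrow> V \<noteq> {} \<and> (\<forall>u\<in>V. \<forall>v\<in>V. \<exists>xs. walk_between V E u v xs)"

definition gdist :: "'a set \<Rightarrow> ('a \<Rightarrow> 'a \<Rightarrow> bool) \<Rightarrow> 'a \<Rightarrow> 'a \<Rightarrow> nat" where
  "gdist V E u v = (LEAST n. \<exists>xs. walk_between V E u v xs \<and> length xs = Suc n)"

definition geodesic :: "'a set \<Rightarrow> ('a \<Rightarrow> 'a \<Rightarrow> bool) \<Rightarrow> 'a list \<Rightarrow> bool" where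
  "geodesic V E xs \<longleftrightarrow> is_walk V E xs \<and> length xs = Suc (gdist V E (hd xs) (last xs))"

definition diam :: "'a set \<Rightarrow> ('a \<Rightarrow> 'a \<Rightarrow> bool) \<Rightarrow> nat" where
  "diam V E = Max {gdist V E u v | u v. u \<in> V \<and> v \<in> V}"

definition gp_set :: "'a set \<Rightarrow> ('a \<Rightarrow> 'a \<Rightarrow> bool) \<Rightarrow> 'a set \<Rightarrow> bool" where
  "gp_set V E S \<longleftrightarrow> S \<subseteq> V \<and>
     (\<forall>x\<in>S. \<forall>y\<in>S. \<forall>z\<in>S. x \<noteq> y \<and> y \<noteq> z \<and> x \<noteq> z \<longrightarrow>
        \<not> (\<exists>P. geodesic V E P \<and> x \<in> set P \<and> y \<in> set P \<and> z \<in> set P))"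

definition gp_number :: "'a set \<Rightarrow> ('a \<Rightarrow> 'a \<Rightarrow> bool) \<Rightarrow> nat" where
  "gp_number V E = Max (card ` {S. gp_set V E S})"

definition maximally_distant :: "'a set \<Rightarrow> ('a \<Rightarrow> 'a \<Rightarrow> bool) \<Rightarrow> 'a \<Rightarrow> 'a \<Rightarrow> bool" where
  "maximally_distant V E u v \<longleftrightarrow> (\<forall>w. E u w \<longrightarrow> gdist V E v w \<le> gdist V E u v)"

definition MMD :: "'a set \<Rightarrow> ('a \<Rightarrow> 'a \<Rightarrow> bool) \<Rightarrow> 'a \<Rightarrow> 'a \<Rightarrow> bool" where
  "MMD V E u v \<longleftrightarrow> maximally_distant V E u v \<and> maximally_distant V E v u"

definition strong_resolving_edge :: "'a set \<Rightarrow> ('a \<Rightarrow> 'a \<Rightarrow> bool) \<Rightarrow> 'a \<Rightarrow> 'a \<Rightarrow> bool" where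
  "strong_resolving_edge V E u v \<longleftrightarrow> u \<in> V \<and> v \<in> V \<and> u \<noteq> v \<and> MMD V E u v"

definition clique_number :: "'a set \<Rightarrow> ('a \<Rightarrow> 'a \<Rightarrow> bool) \<Rightarrow> nat" where
  "clique_number V E = Max (card ` {K. K \<subseteq> V \<and> (\<forall>x\<in>K. \<forall>y\<in>K. x \<noteq> y \<longrightarrow> E x y)})"

definition independence_number :: "'a set \<Rightarrow> ('a \<Rightarrow> 'a \<Rightarrow> bool) \<Rightarrow> nat" where
  "independence_number V E = Max (card ` {I. I \<subseteq> V \<and> (\<forall>x\<in>I. \<forall>y\<in>I. \<not> E x y)})"

definition closed_nbhd :: "'a set \<Rightarrow> ('a \<Rightarrow> 'a \<Rightarrow> bool) \<Rightarrow> 'a \<Rightarrow> 'a set" where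
  "closed_nbhd V E u = insert u {w \<in> V. E u w}"

definition true_twins :: "'a set \<Rightarrow> ('a \<Rightarrow> 'a \<Rightarrow> bool) \<Rightarrow> 'a \<Rightarrow> 'a \<Rightarrow> bool" where
  "true_twins V E u v \<longleftrightarrow> closed_nbhd V E u = closed_nbhd V E v"

definition no_true_twins :: "'a set \<Rightarrow> ('a \<Rightarrow> 'a \<Rightarrow> bool) \<Rightarrow> bool" where
  "no_true_twins V E \<longleftrightarrow> (\<forall>u\<in>V. \<forall>v\<in>V. u \<noteq> v \<longrightarrow> \<not> true_twins V E u v)"

end

theory Submission
  imports Defs
begin

text \<open>In a graph of diameter two without true twins, two distinct vertices are mutually
maximally distant exactly when they are non-adjacent: non-adjacent vertices are at the
maximal distance two, while for adjacent u, v each being maximally distant from the other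
forces every neighbour of u to be within distance one of v and vice versa, i.e. u and v
are true twins. Hence the strong resolving graph is the complement of G, its cliques
are the independent sets of G, and \<omega>(G_SR) = \<alpha>(G).\<close>

lemma gdist_attained:
  assumes "connected_graph V E" "u \<in> V" "v \<in> V"
  shows "\<exists>xs. walk_between V E u v xs \<and> length xs = Suc (gdist V E u v)"
proof -
  obtain xs where xs: "walk_between V E u v xs"
    using assms unfolding connected_graph_def by blast
  then have "xs \<noteq> []" unfolding walk_between_def is_walk_def by blast
  with xs have "\<exists>n xs. walk_between V E u v xs \<and> length xs = Suc n"
    by (metis Suc_pred length_greater_0_conv)
  then show ?thesis unfolding gdist_def by (rule LeastI_ex)
qed

lemma gdist_le_1_imp_eq_or_adjacent:
  assumes "connected_graph V E" "u \<in> V" "v \<in> V" "gdist V E u v \<le> 1"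
  shows "u = v \<or> E u v"
proof -
  obtain xs where xs: "walk_between V E u v xs" "length xs = Suc (gdist V E u v)"
    using gdist_attained[OF assms(1-3)] by blast
  consider a where "xs = [a]" | a b where "xs = [a, b]"
    using xs(2) assms(4) by (auto simp: length_Suc_conv le_Suc_eq)
  then show ?thesis
    using xs(1) unfolding walk_between_def is_walk_def by cases auto
qed

lemma gdist_adjacent_le_1:
  assumes "simple_graph V E" "E u v"
  shows "gdist V E u v \<le> 1"
proof -
  have "walk_between V E u v [u, v]"
    using assms unfolding simple_graph_def walk_between_def is_walk_def
    by (auto simp: less_Suc_eq)
  then show ?thesis unfolding gdist_def by (intro Least_le[where k = 1]) auto
qed

lemma gdist_le_diam:
  assumes "simple_graph V E" "u \<in> V" "v \<in> V"
  shows "gdist V E u v \<le> diam V E"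
proof -
  have "{gdist V E u v | u v. u \<in> V \<and> v \<in> V} = (\<lambda>(u, v). gdist V E u v) ` (V \<times> V)"
    by auto
  moreover have "finite V" using assms(1) unfolding simple_graph_def by blast
  ultimately show ?thesis unfolding diam_def using assms(2,3) by (intro Max_ge) auto
qed

lemma maximally_distant_adjacent_imp_closed_nbhd_subset:
  assumes "simple_graph V E" "connected_graph V E"
    and "E u v" "maximally_distant V E u v"
  shows "closed_nbhd V E u \<subseteq> closed_nbhd V E v"
proof
  fix w assume w: "w \<in> closed_nbhd V E u"
  have uv: "u \<in> V" "v \<in> V" "E v u"
    using assms(1,3) unfolding simple_graph_def by blast+
  show "w \<in> closed_nbhd V E v"
  proof (cases "w = u")
    case True
    then show ?thesis using uv unfolding closed_nbhd_def by auto
  next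
    case False
    then have uw: "E u w" "w \<in> V" using w unfolding closed_nbhd_def by auto
    have "gdist V E v w \<le> 1"
      using assms(4) uw(1) gdist_adjacent_le_1[OF assms(1,3)]
      unfolding maximally_distant_def by force
    then have "v = w \<or> E v w"
      using gdist_le_1_imp_eq_or_adjacent[OF assms(2) uv(2) uw(2)] by blast
    then show ?thesis using uw unfolding closed_nbhd_def by auto
  qed
qed

lemma MMD_adjacent_imp_true_twins:
  assumes "simple_graph V E" "connected_graph V E" "E u v" "MMD V E u v"
  shows "true_twins V E u v"
proof -
  have "E v u" using assms(1,3) unfolding simple_graph_def by blast
  then show ?thesis
    using maximally_distant_adjacent_imp_closed_nbhd_subset[OF assms(1,2)] assms(3,4)
    unfolding MMD_def true_twins_def by blast
qed

lemma nonadjacent_imp_maximally_distant: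
  assumes "simple_graph V E" "connected_graph V E" "diam V E \<le> 2"
    and "u \<in> V" "v \<in> V" "u \<noteq> v" "\<not> E u v"
  shows "maximally_distant V E u v"
  unfolding maximally_distant_def
proof (intro allI impI)
  fix w assume "E u w"
  then have "w \<in> V" using assms(1) unfolding simple_graph_def by blast
  then have "gdist V E v w \<le> 2" using gdist_le_diam[OF assms(1,5), of w] assms(3) by linarith
  moreover have "2 \<le> gdist V E u v"
    using gdist_le_1_imp_eq_or_adjacent[OF assms(2,4,5)] assms(6,7) by force
  ultimately show "gdist V E v w \<le> gdist V E u v" by simp
qed

lemma MMD_iff_nonadjacent_if_diam_2:
  assumes "simple_graph V E" "connected_graph V E" "no_true_twins V E" "diam V E \<le> 2"
    and "u \<in> V" "v \<in> V" "u \<noteq> v"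
  shows "MMD V E u v \<longleftrightarrow> \<not> E u v"
proof
  assume "MMD V E u v"
  then show "\<not> E u v"
    using MMD_adjacent_imp_true_twins[OF assms(1,2)] assms(3,5-7)
    unfolding no_true_twins_def by blast
next
  assume "\<not> E u v"
  moreover have "\<not> E v u" using calculation assms(1) unfolding simple_graph_def by blast
  ultimately show "MMD V E u v"
    using nonadjacent_imp_maximally_distant[OF assms(1,2,4)] assms(5-7)
    unfolding MMD_def by auto
qed

lemma clique_number_strong_resolving_eq_independence_number:
  assumes "simple_graph V E" "connected_graph V E" "no_true_twins V E" "diam V E \<le> 2"
  shows "clique_number V (strong_resolving_edge V E) = independence_number V E"
proof -
  have "(x \<noteq> y \<longrightarrow> strong_resolving_edge V E x y) \<longleftrightarrow> \<not> E x y"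
    if "x \<in> V" "y \<in> V" for x y
  proof (cases "x = y")
    case True
    then show ?thesis using assms(1) unfolding simple_graph_def by blast
  next
    case False
    then show ?thesis
      using MMD_iff_nonadjacent_if_diam_2[OF assms that] that
      unfolding strong_resolving_edge_def by blast
  qed
  then have "{K. K \<subseteq> V \<and> (\<forall>x\<in>K. \<forall>y\<in>K. x \<noteq> y \<longrightarrow> strong_resolving_edge V E x y)}
      = {I. I \<subseteq> V \<and> (\<forall>x\<in>I. \<forall>y\<in>I. \<not> E x y)}"
    by (intro Collect_cong) (meson subset_iff)
  then show ?thesis unfolding clique_number_def independence_number_def by simp
qed

theorem proposition2p4:
  fixes V :: "'a set" and E :: "'a \<Rightarrow> 'a \<Rightarrow> bool"
  assumes "simple_graph V E"
    and "connected_graph V E"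
    and "no_true_twins V E"
    and "diam V E = 2"
  shows "gp_number V E = clique_number V (strong_resolving_edge V E)
         \<longleftrightarrow> gp_number V E = independence_number V E"
  using clique_number_strong_resolving_eq_independence_number[OF assms(1-3)] assms(4)
  by simp

end
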